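(* Let $x_i,y_i\in K_i$ for each $1\le i\le N$. Then: (i) $\lim_{m\to-\infty}d\big(Y^{x_1\dots x_N}_{m0}(\sigma),Y^{y_1\dots y_N}_{m0}(\sigma)\big)=0$ for all $\sigma$ outside a set of $P_{x_1\dots x_N}$-outer measure zero; (ii) the limit $F_{x_1\dots x_N}(\sigma):=\lim_{m\to-\infty}Y^{x_1\dots x_N}_{m0}(\sigma)$ exists for all $\sigma$ outside a set of $P_{x_1\dots x_N}$-outer measure zero, and $F_{x_1\dots x_N}=F_{y_1\dots y_N}$ outside a set of $P_{x_1\dots x_N}$-outer measure zero; (iii) there exist closed subsets $Q_1\subset Q_2\subset\cdots\subset\Sigma$ with $\sum_{k=1}^\infty P_{x_1\dots x_N}(\Sigma\setminus Q_k)<\infty$, and constants $\alpha,C>0$, such that for every $k$ there exists $\delta_k>0$ with: $F_{x_1\dots x_N}$ is defined on $Q_k$ and for all $\sigma,\sigma'\in Q_k$ with $d'(\sigma,\sigma')\le\delta_k$, $d(F_{x_1\dots x_N}(\sigma),F_{x_1\dots x_N}(\sigma'))\le C\,d'(\sigma,\sigma')^\alpha$.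
   Context: A contractive Markov system (CMS) with average contracting rate $0<a<1$ consists of: a finite directed multigraph $(V,E,i,t)$ with vertex set $V=\{1,\dots,N\}$, finite edge set $E$, and maps $i,t:E\to V$ giving the initial and terminal vertex of each edge; a complete metric space $(K,d)$ partitioned into non-empty Borel sets $K_1,\dots,K_N$; Borel measurable maps $w_e:K\to K$ ($e\in E$) with $w_e(K_{i(e)})\subset K_{t(e)}$; Borel measurable functions $p_e:K\to[0,\infty)$ with $\sum_{e\in E}p_e(x)=1$ for all $x\in K$ and $p_e=0$ on $K\setminus K_{i(e)}$; and such that $\sum_{e\in E}p_e(x)d(w_ex,w_ey)\leq a\,d(x,y)$ for all $x,y\in K_j$, $j=1,\dots,N$. No further conditions are imposed on the graph. Let $\Sigma:=E^{\mathbb{Z}}$ with metric $d'(\sigma,\sigma'):=(1/2)^k$ where $k$ is the largest integer with $\sigma_j=\sigma'_j$ for all $|j|<k$. For $m\le n$ the cylinder $_m[e_m,\dots,e_n]:=\{\sigma\in\Sigma:\sigma_j=e_j,\ m\le j\le n\}$. For an integer $m\le 1$, $\mathcal{A}_m$ is the $\sigma$-algebra generated by the cylinders $_m[e_m,\dots,e_n]$, $n\ge m$. For $x\in K$, $P^m_x$ is the probability measure on $(\Sigma,\mathcal{A}_m)$ with $P^m_x(_m[e_m,\dots,e_n])=p_{e_m}(x)\,p_{e_{m+1}}(w_{e_m}x)\cdots p_{e_n}(w_{e_{n-1}}\circ\cdots\circ w_{e_m}x)$. For a Borel probability measure $\nu$ on $K$, $\Phi_m(\nu)(A)=\int P^m_x(A)\,d\nu(x)$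 for $A\in\mathcal{A}_m$. For $B\subset\Sigma$ let $\mathcal{C}(B)$ be the set of sequences $(A_m)_{m\le 0}$ with $A_m\in\mathcal{A}_m$ and $B\subset\bigcup_{m\le 0}A_m$, and $\Phi(\nu)(B):=\inf\{\sum_{m\le 0}\Phi_m(\nu)(A_m):(A_m)_{m\le0}\in\mathcal{C}(B)\}$ (an outer measure on $\Sigma$). Fix $x_i\in K_i$, $i=1,\dots,N$, and set $P^m_{x_1\dots x_N}:=\Phi_m\big(\frac1N\sum_{i=1}^N\delta_{x_i}\big)$ and $P_{x_1\dots x_N}:=\Phi\big(\frac1N\sum_{i=1}^N\delta_{x_i}\big)$, where $\delta_x$ is the Dirac measure at $x$. For $m\le 0$ and $n\ge m$ define $Y^{x_1\dots x_N}_{mn}:\Sigma\to K$ by $Y^{x_1\dots x_N}_{mn}(\sigma):=w_{\sigma_n}\circ w_{\sigma_{n-1}}\circ\cdots\circ w_{\sigma_m}(x_{i(\sigma_m)})$. *)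

theory Defs
  imports "HOL-Probability.Probability"
begin

text \<open>Vertices: finite type 'v (so N = CARD('v)),
  edges: finite type 'e, state space: complete metric space 'a (K = UNIV).
  iv, tv: initial / terminal vertex maps; K v: the partition sets.\<close>

definition cms ::
  "('e::finite \<Rightarrow> 'v::finite) \<Rightarrow> ('e \<Rightarrow> 'v) \<Rightarrow> ('v \<Rightarrow> 'a::complete_space set)
   \<Rightarrow> ('e \<Rightarrow> 'a \<Rightarrow> 'a) \<Rightarrow> ('e \<Rightarrow> 'a \<Rightarrow> real) \<Rightarrow> real \<Rightarrow> bool" where
  "cms iv tv K w p a \<longleftrightarrow>
     0 < a \<and> a < 1 \<and>
     (\<forall>v. K v \<noteq> {} \<and> K v \<in> sets borel) \<and>
     (\<forall>u v. u \<noteq> v \<longrightarrow> K u \<inter> K v = {}) \<and> (\<Union>v. K v) = UNIV \<and>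
     (\<forall>e. w e \<in> borel \<rightarrow>\<^sub>M borel) \<and> (\<forall>e. w e ` K (iv e) \<subseteq> K (tv e)) \<and>
     (\<forall>e. p e \<in> borel_measurable borel) \<and> (\<forall>e x. 0 \<le> p e x) \<and>
     (\<forall>x. (\<Sum>e\<in>UNIV. p e x) = 1) \<and> (\<forall>e x. x \<notin> K (iv e) \<longrightarrow> p e x = 0) \<and>
     (\<forall>v x y. x \<in> K v \<longrightarrow> y \<in> K v \<longrightarrow>
        (\<Sum>e\<in>UNIV. p e x * dist (w e x) (w e y)) \<le> a * dist x y)"

definition dS :: "(int \<Rightarrow> 'e) \<Rightarrow> (int \<Rightarrow> 'e) \<Rightarrow> real" where
  "dS \<sigma> \<sigma>' = (if \<sigma> = \<sigma>' then 0
     else (1/2) ^ (LEAST k::nat. \<exists>j. \<bar>j\<bar> \<le> int k \<and> \<sigma> j \<noteq> \<sigma>' j))"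

definition dS_closed :: "(int \<Rightarrow> 'e) set \<Rightarrow> bool" where
  "dS_closed Q \<longleftrightarrow> (\<forall>\<sigma>. (\<forall>\<epsilon>>0. \<exists>\<tau>\<in>Q. dS \<sigma> \<tau> < \<epsilon>) \<longrightarrow> \<sigma> \<in> Q)"

definition cyl :: "int \<Rightarrow> 'e list \<Rightarrow> (int \<Rightarrow> 'e) set" where
  "cyl m es = {\<sigma>. \<forall>k < length es. \<sigma> (m + int k) = es ! k}"

definition Alg :: "int \<Rightarrow> (int \<Rightarrow> 'e) set set" where
  "Alg m = sigma_sets UNIV {cyl m es | es. es \<noteq> []}"

fun path_prob :: "('e \<Rightarrow> 'a \<Rightarrow> real) \<Rightarrow> ('e \<Rightarrow> 'a \<Rightarrow> 'a) \<Rightarrow> 'a \<Rightarrow> 'e list \<Rightarrow> real" where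
  "path_prob p w x [] = 1"
| "path_prob p w x (e # es) = p e x * path_prob p w (w e x) es"

definition Pm :: "('e \<Rightarrow> 'a \<Rightarrow> real) \<Rightarrow> ('e \<Rightarrow> 'a \<Rightarrow> 'a) \<Rightarrow> int \<Rightarrow> 'a \<Rightarrow> (int \<Rightarrow> 'e) measure" where
  "Pm p w m x = (THE \<mu>. space \<mu> = UNIV \<and> sets \<mu> = Alg m \<and>
      (\<forall>es. es \<noteq> [] \<longrightarrow> emeasure \<mu> (cyl m es) = ennreal (path_prob p w x es)))"

definition PmN :: "('e \<Rightarrow> 'a \<Rightarrow> real) \<Rightarrow> ('e \<Rightarrow> 'a \<Rightarrow> 'a) \<Rightarrow> ('v::finite \<Rightarrow> 'a) \<Rightarrow> int
     \<Rightarrow> (int \<Rightarrow> 'e) set \<Rightarrow> ennreal" where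
  "PmN p w xs m A = (\<Sum>v\<in>UNIV. emeasure (Pm p w m (xs v)) A) / of_nat CARD('v)"

text \<open>Outer measure P_{x_1...x_N} = Phi((1/N) sum_i delta_{x_i}); index m = -k, k::nat.\<close>
definition Pouter :: "('e \<Rightarrow> 'a \<Rightarrow> real) \<Rightarrow> ('e \<Rightarrow> 'a \<Rightarrow> 'a) \<Rightarrow> ('v::finite \<Rightarrow> 'a)
     \<Rightarrow> (int \<Rightarrow> 'e) set \<Rightarrow> ennreal" where
  "Pouter p w xs B = (INF A \<in> {A. (\<forall>k::nat. A k \<in> Alg (- int k)) \<and> B \<subseteq> (\<Union>k. A k)}.
       \<Sum>k. PmN p w xs (- int k) (A k))"

definition Y :: "('e \<Rightarrow> 'a \<Rightarrow> 'a) \<Rightarrow> ('e \<Rightarrow> 'v) \<Rightarrow> ('v \<Rightarrow> 'a) \<Rightarrow> int \<Rightarrow> int \<Rightarrow> (int \<Rightarrow> 'e) \<Rightarrow> 'a" where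
  "Y w iv xs m n \<sigma> = foldl (\<lambda>z j. w (\<sigma> j) z) (xs (iv (\<sigma> m))) [m..n]"

end

theory Submission
  imports Defs
begin

text \<open>
  Fix a vertex v and draw the window e_(-j) ... e_0 from P^(-j) started at x_v. Iterating the
  average contraction along the path gives E d(Y^x_(-j,0), Y^y_(-j,0)) <= a^(j+1) d(x_v, y_v)
  and, since the second edge starts in the partition set of the terminal vertex of the first,
  also E d(Y^x_(-j,0), Y^x_(-j+1,0)) <= a^j C. With r = sqrt a, Markov's inequality bounds the
  probability that one of these distances exceeds r^j by C r^j. The bad event of level j only
  depends on sigma_(-j) ... sigma_0, so it lies in A_(-j) and the outer measure of the union of
  the bad events of level >= k is at most C r^k / (1 - r): their limsup is null and these tails
  are summable. On the set Q_k of sequences avoiding every bad event of level >= k, the points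
  Y^x_(-j,0) form a Cauchy sequence with geometric rate that shadows Y^y_(-j,0). If sigma and
  sigma' in Q_k agree on |i| <= n with n >= k, both limits lie within r^n / (1 - r) of the
  common point Y^x_(-n,0), a Hoelder bound in d'(sigma, sigma') = 2^(-n-1).

  The measures P^m_x themselves are built by inverse-transform sampling: a single uniform
  variable on [0, 1) encodes the whole path.
\<close>

section \<open>Windows of a bi-infinite sequence\<close>

definition window :: "int \<Rightarrow> nat \<Rightarrow> (int \<Rightarrow> 'e) \<Rightarrow> 'e list" where
  "window m n \<sigma> = map (\<lambda>i. \<sigma> (m + int i)) [0..<n]"

lemma length_window [simp]: "length (window m n \<sigma>) = n"
  by (simp add: window_def)

lemma nth_window [simp]: "i < n \<Longrightarrow> window m n \<sigma> ! i = \<sigma> (m + int i)"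
  by (simp add: window_def)

lemma window_eq_Nil_iff [simp]: "window m n \<sigma> = [] \<longleftrightarrow> n = 0"
  by (simp add: window_def)

lemma take_window: "k \<le> n \<Longrightarrow> take k (window m n \<sigma>) = window m k \<sigma>"
  by (simp add: window_def take_map)

lemma cyl_eq_window: "cyl m es = {\<sigma>. window m (length es) \<sigma> = es}"
  by (auto simp: cyl_def list_eq_iff_nth_eq)

lemma window_event_eq_UN_cyl:
  "\<forall>es\<in>E. length es = n \<Longrightarrow> {\<sigma>. window m n \<sigma> \<in> E} = (\<Union>es\<in>E. cyl m es)"
  by (auto simp: cyl_eq_window)

lemma tl_window: "tl (window m (Suc n) \<sigma>) = window (m + 1) n \<sigma>"
  by (rule nth_equalityI) (auto simp: nth_tl algebra_simps)

lemma window_eq_if_dS_less: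
  assumes "dS \<sigma> \<tau> < (1/2) ^ j"
  shows "window (- int j) (Suc j) \<sigma> = window (- int j) (Suc j) \<tau>"
proof (cases "\<sigma> = \<tau>")
  case False
  let ?L = "LEAST k::nat. \<exists>i. \<bar>i\<bar> \<le> int k \<and> \<sigma> i \<noteq> \<tau> i"
  have "j < ?L"
    using assms False by (simp add: dS_def power_strict_decreasing_iff)
  have agree: "\<sigma> i = \<tau> i" if "\<bar>i\<bar> \<le> int j" for i
  proof (rule ccontr)
    assume "\<sigma> i \<noteq> \<tau> i"
    then have "?L \<le> j" using that by (intro Least_le) blast
    then show False using \<open>j < ?L\<close> by simp
  qed
  show ?thesis by (rule nth_equalityI) (auto intro: agree)
qed simp

lemma finite_lists_length [simp]: "finite {es :: 'e::finite list. length es = n}"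
  using finite_lists_length_eq[of "UNIV :: 'e set" n] by simp

lemma sum_lists_length_Suc:
  fixes f :: "'e::finite list \<Rightarrow> 'b::comm_monoid_add"
  shows "(\<Sum>es | length es = Suc n. f es) = (\<Sum>e\<in>UNIV. \<Sum>es | length es = n. f (e # es))"
proof -
  have eq: "{es. length es = Suc n} = (\<lambda>(e, es). e # es) ` (UNIV \<times> {es. length es = n})"
    by (auto simp: length_Suc_conv image_iff)
  have inj: "inj_on (\<lambda>(e, es). e # es) (UNIV \<times> {es::'e list. length es = n})"
    by (auto simp: inj_on_def)
  show ?thesis
    unfolding eq sum.reindex[OF inj] sum.cartesian_product by (simp add: case_prod_unfold)
qed

definition apply_path :: "('e \<Rightarrow> 'a \<Rightarrow> 'a) \<Rightarrow> 'e list \<Rightarrow> 'a \<Rightarrow> 'a" where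
  "apply_path w es z = foldl (\<lambda>z e. w e z) z es"

lemma apply_path_simps [simp]:
  "apply_path w [] z = z" "apply_path w (e # es) z = apply_path w es (w e z)"
  by (simp_all add: apply_path_def)

definition Y_path :: "('e \<Rightarrow> 'a \<Rightarrow> 'a) \<Rightarrow> ('e \<Rightarrow> 'v) \<Rightarrow> ('v \<Rightarrow> 'a) \<Rightarrow> 'e list \<Rightarrow> 'a" where
  "Y_path w iv xs es = apply_path w es (xs (iv (hd es)))"

lemma Y_eq_Y_path_window: "Y w iv xs (- int k) 0 \<sigma> = Y_path w iv xs (window (- int k) (Suc k) \<sigma>)"
proof -
  have "[- int k..0] = map (\<lambda>i. - int k + int i) [0..<Suc k]"
    by (rule nth_equalityI) (auto simp del: upt_Suc)
  then show ?thesis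
    by (simp add: Y_def Y_path_def apply_path_def window_def foldl_map hd_map del: upt_Suc)
qed

lemma cyl_Nil [simp]: "cyl m [] = UNIV"
  by (simp add: cyl_def)

lemma cyl_in_Alg: "es \<noteq> [] \<Longrightarrow> cyl m es \<in> Alg m"
  unfolding Alg_def by (rule sigma_sets.Basic) auto

lemma cyl_Int_cyl:
  assumes "length es \<le> length fs"
  shows "cyl m es \<inter> cyl m fs \<in> insert {} (range (cyl m))"
proof (cases "take (length es) fs = es")
  case True
  then have "cyl m fs \<subseteq> cyl m es"
    using assms by (auto simp: cyl_eq_window take_window[symmetric])
  then show ?thesis by (simp add: Int_absorb1)
next
  case False
  then have "cyl m es \<inter> cyl m fs = {}"
    using assms by (auto simp: cyl_eq_window take_window[symmetric])
  then show ?thesis by simp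
qed

lemma Int_stable_cyl: "Int_stable (insert {} (range (cyl m :: 'e list \<Rightarrow> _)))"
proof (rule Int_stableI)
  fix A B :: "(int \<Rightarrow> 'e) set"
  assume "A \<in> insert {} (range (cyl m))" "B \<in> insert {} (range (cyl m))"
  then consider "A = {} \<or> B = {}" | es fs where "A = cyl m es" "B = cyl m fs" by auto
  then show "A \<inter> B \<in> insert {} (range (cyl m))"
  proof cases
    case 2
    then show ?thesis
      using cyl_Int_cyl[of es fs m] cyl_Int_cyl[of fs es m]
      by (cases "length es \<le> length fs") (auto simp: Int_commute)
  qed auto
qed

lemma Alg_eq_sigma_sets_cyl: "Alg m = sigma_sets UNIV (insert {} (range (cyl m)))"
proof
  show "Alg m \<subseteq> sigma_sets UNIV (insert {} (range (cyl m)))"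
    unfolding Alg_def by (rule sigma_sets_mono') auto
  have "cyl m es \<in> Alg m" for es
    using cyl_in_Alg[of es m] sigma_sets_top[of UNIV] by (cases "es = []") (auto simp: Alg_def)
  then have "insert {} (range (cyl m)) \<subseteq> Alg m"
    by (auto simp: Alg_def intro: sigma_sets.Empty)
  then show "sigma_sets UNIV (insert {} (range (cyl m))) \<subseteq> Alg m"
    unfolding Alg_def by (rule sigma_sets_mono)
qed

lemma window_event_in_Alg:
  fixes E :: "'e::finite list set"
  assumes "0 < n" "\<forall>es\<in>E. length es = n"
  shows "{\<sigma>. window m n \<sigma> \<in> E} \<in> Alg m"
proof -
  have "finite E" using assms(2) by (intro finite_subset[OF _ finite_lists_length[of n]]) auto
  moreover have "ring_of_sets UNIV (Alg m)"
    unfolding Alg_def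
    by (intro algebra.axioms(1) sigma_algebra.axioms(1) sigma_algebra_sigma_sets) auto
  ultimately have "(\<Union>es\<in>E. cyl m es) \<in> Alg m"
    using assms by (intro ring_of_sets.finite_UN) (auto intro!: cyl_in_Alg)
  then show ?thesis using window_event_eq_UN_cyl[OF assms(2)] by simp
qed

section \<open>Path measures by inverse-transform sampling\<close>

locale random_map =
  fixes p :: "'e::finite \<Rightarrow> 'a \<Rightarrow> real" and w :: "'e \<Rightarrow> 'a \<Rightarrow> 'a"
  assumes p_nonneg: "0 \<le> p e x" and sum_p: "(\<Sum>e\<in>UNIV. p e x) = 1"
begin

definition mass_below :: "'a \<Rightarrow> nat \<Rightarrow> real" where
  "mass_below x k = (\<Sum>e | to_nat e < k. p e x)"

lemma mass_below_0 [simp]: "mass_below x 0 = 0"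
  by (simp add: mass_below_def)

lemma mass_below_mono: "k \<le> l \<Longrightarrow> mass_below x k \<le> mass_below x l"
  unfolding mass_below_def by (rule sum_mono2) (auto simp: p_nonneg)

lemma mass_below_Suc_to_nat: "mass_below x (Suc (to_nat e)) = mass_below x (to_nat e) + p e x"
proof -
  have "{e'. to_nat e' < Suc (to_nat e)} = insert e {e'. to_nat e' < to_nat e}"
    by (auto simp: less_Suc_eq)
  then show ?thesis by (simp add: mass_below_def)
qed

lemma mass_below_Suc_not_to_nat:
  "k \<notin> range (to_nat :: 'e \<Rightarrow> nat) \<Longrightarrow> mass_below x (Suc k) = mass_below x k"
proof -
  assume "k \<notin> range (to_nat :: 'e \<Rightarrow> nat)"
  then have "{e::'e. to_nat e < Suc k} = {e. to_nat e < k}" by (auto simp: less_Suc_eq)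
  then show ?thesis by (simp add: mass_below_def)
qed

lemma mass_below_eq_1: "\<exists>k. mass_below x k = 1"
proof
  have "{e::'e. to_nat e < Suc (Max (range (to_nat :: 'e \<Rightarrow> nat)))} = UNIV"
    by (auto intro!: le_imp_less_Suc Max_ge finite_imageI)
  then show "mass_below x (Suc (Max (range (to_nat :: 'e \<Rightarrow> nat)))) = 1"
    by (simp add: mass_below_def sum_p)
qed

text \<open>The intervals \<open>[mass_below x (to_nat e), mass_below x (to_nat e) + p e x)\<close> tile
  \<open>[0, 1)\<close>, so reading off the tile of a uniform \<open>u\<close> draws an edge with law \<open>p \<cdot> x\<close>.\<close>

definition in_tile :: "'a \<Rightarrow> real \<Rightarrow> 'e \<Rightarrow> bool" where
  "in_tile x u e \<longleftrightarrow> mass_below x (to_nat e) \<le> u \<and> u < mass_below x (to_nat e) + p e x"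

lemma in_tile_exists:
  assumes "0 \<le> u" "u < 1"
  shows "\<exists>e. in_tile x u e"
proof -
  obtain K where "mass_below x K = 1" using mass_below_eq_1 by blast
  then have "u < mass_below x (Suc K)" using assms mass_below_mono[of K "Suc K" x] by simp
  define k where "k = (LEAST l. u < mass_below x (Suc l))"
  have k: "u < mass_below x (Suc k)"
    unfolding k_def by (rule LeastI) fact
  have "mass_below x k \<le> u"
  proof (cases k)
    case (Suc l)
    then have "\<not> u < mass_below x (Suc l)"
      unfolding k_def by (intro not_less_Least) (simp add: k_def[symmetric])
    then show ?thesis using Suc by simp
  qed (use assms in simp)
  have "k \<in> range (to_nat :: 'e \<Rightarrow> nat)"
  proof (rule ccontr)
    assume "k \<notin> range (to_nat :: 'e \<Rightarrow> nat)"
    then have "mass_below x (Suc k) = mass_below x k" by (rule mass_below_Suc_not_to_nat)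
    with k \<open>mass_below x k \<le> u\<close> show False by simp
  qed
  then obtain e :: 'e where "k = to_nat e" by blast
  then show ?thesis
    using k(1) \<open>mass_below x k \<le> u\<close> by (auto simp: in_tile_def mass_below_Suc_to_nat)
qed

lemma in_tile_unique: "in_tile x u e \<Longrightarrow> in_tile x u e' \<Longrightarrow> e = e'"
proof (rule ccontr)
  have less: False if "in_tile x u e1" "in_tile x u e2" "to_nat e1 < to_nat e2" for e1 e2
  proof -
    have "mass_below x (to_nat e1) + p e1 x \<le> mass_below x (to_nat e2)"
      using mass_below_mono[of "Suc (to_nat e1)" "to_nat e2" x] that(3)
      by (simp add: mass_below_Suc_to_nat)
    then show False using that(1,2) by (simp add: in_tile_def)
  qed
  assume "in_tile x u e" "in_tile x u e'" "e \<noteq> e'"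
  then show False
    using less[of e e'] less[of e' e] by (metis linorder_neqE_nat to_nat_split)
qed

definition pick :: "'a \<Rightarrow> real \<Rightarrow> 'e" where
  "pick x u = (THE e. in_tile x u e)"

lemma in_tile_pick: "0 \<le> u \<Longrightarrow> u < 1 \<Longrightarrow> in_tile x u (pick x u)"
  unfolding pick_def by (rule theI') (use in_tile_exists in_tile_unique in blast)

lemma pick_eqI: "0 \<le> u \<Longrightarrow> u < 1 \<Longrightarrow> in_tile x u e \<Longrightarrow> pick x u = e"
  using in_tile_pick in_tile_unique by blast

text \<open>After drawing \<open>e = pick x u\<close>, the position of \<open>u\<close> inside the tile of \<open>e\<close>,
  rescaled to \<open>[0, 1)\<close>, is again uniform and draws the rest of the path.\<close>

fun sample :: "'a \<Rightarrow> real \<Rightarrow> nat \<Rightarrow> 'e list" where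
  "sample x u 0 = []"
| "sample x u (Suc n) =
     pick x u # sample (w (pick x u) x) ((u - mass_below x (to_nat (pick x u))) / p (pick x u) x) n"

fun path_offset :: "'a \<Rightarrow> 'e list \<Rightarrow> real" where
  "path_offset x [] = 0"
| "path_offset x (e # es) = mass_below x (to_nat e) + p e x * path_offset (w e x) es"

lemma path_prob_nonneg: "0 \<le> path_prob p w x es"
  by (induction es arbitrary: x) (auto simp: p_nonneg)

lemma mass_below_nonneg: "0 \<le> mass_below x k"
  using mass_below_mono[of 0 k x] by simp

lemma mass_below_le_1: "mass_below x k \<le> 1"
  unfolding mass_below_def sum_p[of x, symmetric] by (rule sum_mono2) (auto simp: p_nonneg)

lemma tile_le_1: "mass_below x (to_nat e) + p e x \<le> 1"
  using mass_below_le_1[of x "Suc (to_nat e)"] by (simp add: mass_below_Suc_to_nat)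

lemma path_interval_bounds: "0 \<le> path_offset x es \<and> path_offset x es + path_prob p w x es \<le> 1"
proof (induction es arbitrary: x)
  case (Cons e es)
  have IH: "0 \<le> path_offset (w e x) es" "path_offset (w e x) es + path_prob p w (w e x) es \<le> 1"
    using Cons.IH by auto
  have "p e x * (path_offset (w e x) es + path_prob p w (w e x) es) \<le> p e x"
    using IH(2) p_nonneg mult_left_le by blast
  then show ?case
    using IH(1) tile_le_1[of x e] mass_below_nonneg[of x] p_nonneg[of e x]
    by (simp add: algebra_simps)
qed simp

lemma length_sample [simp]: "length (sample x u n) = n"
  by (induction n arbitrary: x u) auto

lemma take_sample: "take n (sample x u (n + d)) = sample x u n"
  by (induction n arbitrary: x u) auto

lemma sample_eq_iff:
  assumes "0 \<le> u" "u < 1"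
  shows "sample x u (length es) = es \<longleftrightarrow>
    path_offset x es \<le> u \<and> u < path_offset x es + path_prob p w x es"
  using assms
proof (induction es arbitrary: x u)
  case (Cons e es)
  let ?u' = "(u - mass_below x (to_nat e)) / p e x"
  show ?case
  proof (cases "in_tile x u e")
    case True
    then have pick: "pick x u = e" using Cons.prems by (intro pick_eqI)
    have pos: "0 < p e x" using True by (simp add: in_tile_def)
    have u': "0 \<le> ?u'" "?u' < 1"
      using True pos by (simp_all add: in_tile_def divide_less_eq)
    have "path_offset (w e x) es \<le> ?u' \<longleftrightarrow> path_offset x (e # es) \<le> u"
      using pos by (simp add: le_divide_eq algebra_simps)
    moreover have "?u' < path_offset (w e x) es + path_prob p w (w e x) es \<longleftrightarrow>
        u < path_offset x (e # es) + path_prob p w x (e # es)"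
      using pos by (simp add: divide_less_eq algebra_simps)
    ultimately show ?thesis
      using Cons.IH[OF u'] pick by simp
  next
    case False
    have "pick x u \<noteq> e" using False in_tile_pick Cons.prems by metis
    moreover have
      "\<not> (path_offset x (e # es) \<le> u \<and> u < path_offset x (e # es) + path_prob p w x (e # es))"
    proof
      assume u: "path_offset x (e # es) \<le> u \<and>
        u < path_offset x (e # es) + path_prob p w x (e # es)"
      have b: "0 \<le> path_offset (w e x) es" "path_offset (w e x) es + path_prob p w (w e x) es \<le> 1"
        using path_interval_bounds by auto
      have "p e x * (path_offset (w e x) es + path_prob p w (w e x) es) \<le> p e x"
        using b(2) p_nonneg mult_left_le by blast
      moreover have "0 \<le> p e x * path_offset (w e x) es" using b(1) p_nonneg by simp
      ultimately have "in_tile x u e"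
        using u by (auto simp: in_tile_def algebra_simps)
      then show False using False by contradiction
    qed
    ultimately show ?thesis by simp
  qed
qed simp

definition sample_seq :: "int \<Rightarrow> 'a \<Rightarrow> real \<Rightarrow> int \<Rightarrow> 'e" where
  "sample_seq m x u j = sample x u (Suc (nat (j - m))) ! nat (j - m)"

lemma window_sample_seq: "window m n (sample_seq m x u) = sample x u n"
proof (rule nth_equalityI)
  fix i assume "i < length (window m n (sample_seq m x u))"
  then have "sample x u (Suc i) = take (Suc i) (sample x u n)"
    using take_sample[of "Suc i" x u "n - Suc i"] by simp
  then have "sample x u (Suc i) ! i = sample x u n ! i" by simp
  with \<open>i < _\<close> show "window m n (sample_seq m x u) ! i = sample x u n ! i"
    by (simp add: sample_seq_def)
qed simp

lemma sample_seq_vimage_cyl: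
  "sample_seq m x -` cyl m es \<inter> {0..<1} =
     {path_offset x es..<path_offset x es + path_prob p w x es}"
  using sample_eq_iff path_interval_bounds[of x es]
  by (fastforce simp: cyl_eq_window window_sample_seq)

definition is_Pm :: "int \<Rightarrow> 'a \<Rightarrow> (int \<Rightarrow> 'e) measure \<Rightarrow> bool" where
  "is_Pm m x \<mu> \<longleftrightarrow> space \<mu> = UNIV \<and> sets \<mu> = Alg m \<and>
     (\<forall>es. es \<noteq> [] \<longrightarrow> emeasure \<mu> (cyl m es) = ennreal (path_prob p w x es))"

lemma is_Pm_exists: "\<exists>\<mu>. is_Pm m x \<mu>"
proof -
  let ?L = "restrict_space lborel {0..<1::real}"
  let ?M = "sigma (UNIV :: (int \<Rightarrow> 'e) set) {cyl m es | es. es \<noteq> []}"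
  have meas: "sample_seq m x \<in> measurable ?L ?M"
  proof (rule measurable_measure_of)
    fix A assume "A \<in> {cyl m es | es :: 'e list. es \<noteq> []}"
    then obtain es where "A = cyl m es" by auto
    then show "sample_seq m x -` A \<inter> space ?L \<in> sets ?L"
      using sample_seq_vimage_cyl[of m x es] path_interval_bounds[of x es]
      by (auto simp: space_restrict_space sets_restrict_space)
  qed auto
  have "emeasure (distr ?L ?M (sample_seq m x)) (cyl m es) = ennreal (path_prob p w x es)"
    if "es \<noteq> []" for es
  proof -
    have "emeasure (distr ?L ?M (sample_seq m x)) (cyl m es) =
        emeasure lborel {path_offset x es..<path_offset x es + path_prob p w x es}"
      using that meas sample_seq_vimage_cyl[of m x es] path_interval_bounds[of x es]
      by (subst emeasure_distr) (auto simp: space_restrict_space emeasure_restrict_space)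
    then show ?thesis using path_prob_nonneg[of x es] by simp
  qed
  then show ?thesis
    by (intro exI[of _ "distr ?L ?M (sample_seq m x)"]) (simp add: is_Pm_def Alg_def)
qed

lemma is_Pm_emeasure_UNIV: "is_Pm m x \<mu> \<Longrightarrow> emeasure \<mu> UNIV = 1"
proof -
  assume \<mu>: "is_Pm m x \<mu>"
  have UNIV: "UNIV = (\<Union>e\<in>UNIV. cyl m [e])" by (auto simp: cyl_def)
  have "disjoint_family (\<lambda>e. cyl m [e])" by (auto simp: disjoint_family_on_def cyl_def)
  moreover have "cyl m [e] \<in> sets \<mu>" for e using \<mu> cyl_in_Alg[of "[e]" m] by (simp add: is_Pm_def)
  ultimately have "emeasure \<mu> UNIV = (\<Sum>e\<in>UNIV. emeasure \<mu> (cyl m [e]))"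
    by (subst UNIV, intro sum_emeasure[symmetric]) auto
  also have "\<dots> = 1"
    using \<mu> by (simp add: is_Pm_def sum_ennreal p_nonneg sum_p)
  finally show ?thesis .
qed

lemma is_Pm_unique: "is_Pm m x \<mu> \<Longrightarrow> is_Pm m x \<nu> \<Longrightarrow> \<mu> = \<nu>"
proof (rule measure_eqI_generator_eq[OF Int_stable_cyl[of m], where \<Omega> = UNIV and A = "\<lambda>_. UNIV"])
  assume \<mu>: "is_Pm m x \<mu>" and \<nu>: "is_Pm m x \<nu>"
  have "emeasure \<mu> (cyl m es) = emeasure \<nu> (cyl m es)" for es
    using \<mu> \<nu> is_Pm_emeasure_UNIV[OF \<mu>] is_Pm_emeasure_UNIV[OF \<nu>] by (cases "es = []") (simp_all add: is_Pm_def)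
  then show "emeasure \<mu> X = emeasure \<nu> X" if "X \<in> insert {} (range (cyl m))" for X
    using that by auto
  show "sets \<mu> = sigma_sets UNIV (insert {} (range (cyl m)))"
    "sets \<nu> = sigma_sets UNIV (insert {} (range (cyl m)))"
    using \<mu> \<nu> by (simp_all add: is_Pm_def Alg_eq_sigma_sets_cyl)
  show "emeasure \<mu> UNIV \<noteq> \<infinity>" using is_Pm_emeasure_UNIV[OF \<mu>] by simp
  show "range (\<lambda>_. UNIV) \<subseteq> insert {} (range (cyl m))"
    using cyl_Nil[of m] by blast
qed auto

lemma is_Pm_Pm: "is_Pm m x (Pm p w m x)"
  unfolding Pm_def is_Pm_def[symmetric]
  by (rule theI') (use is_Pm_exists is_Pm_unique in blast)

lemma sets_Pm: "sets (Pm p w m x) = Alg m"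
  using is_Pm_Pm by (simp add: is_Pm_def)

lemma emeasure_Pm_cyl: "es \<noteq> [] \<Longrightarrow> emeasure (Pm p w m x) (cyl m es) = ennreal (path_prob p w x es)"
  using is_Pm_Pm by (simp add: is_Pm_def)

lemma emeasure_Pm_window_event:
  assumes "0 < n" "\<forall>es\<in>E. length es = n"
  shows "emeasure (Pm p w m x) {\<sigma>. window m n \<sigma> \<in> E} = ennreal (\<Sum>es\<in>E. path_prob p w x es)"
proof -
  have "finite E" using assms(2) by (intro finite_subset[OF _ finite_lists_length[of n]]) auto
  have "disjoint_family_on (cyl m) E"
    using assms(2) by (auto simp: disjoint_family_on_def cyl_eq_window)
  then have "emeasure (Pm p w m x) (\<Union>es\<in>E. cyl m es) = (\<Sum>es\<in>E. emeasure (Pm p w m x) (cyl m es))"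
    using assms \<open>finite E\<close> by (intro sum_emeasure[symmetric]) (auto simp: sets_Pm cyl_in_Alg)
  also have "\<dots> = (\<Sum>es\<in>E. ennreal (path_prob p w x es))"
    using assms by (intro sum.cong) (auto simp: emeasure_Pm_cyl)
  finally show ?thesis
    using window_event_eq_UN_cyl[OF assms(2)] by (simp add: sum_ennreal path_prob_nonneg)
qed

lemma PmN_window_event_le:
  fixes xs :: "'v::finite \<Rightarrow> 'a"
  assumes "0 < n" "\<forall>es\<in>E. length es = n" and le: "\<And>v. (\<Sum>es\<in>E. path_prob p w (xs v) es) \<le> b"
  shows "PmN p w xs m {\<sigma>. window m n \<sigma> \<in> E} \<le> ennreal b"
proof -
  have "(\<Sum>v\<in>UNIV. ennreal (\<Sum>es\<in>E. path_prob p w (xs v) es)) \<le> (\<Sum>v\<in>(UNIV :: 'v set). ennreal b)"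
    using le by (intro sum_mono) (simp add: ennreal_leI)
  then show ?thesis
    by (simp add: PmN_def emeasure_Pm_window_event[OF assms(1,2)] divide_le_posI_ennreal
        ennreal_of_nat_eq_real_of_nat ennreal_mult' mult.commute)
qed

end

section \<open>Borel--Cantelli for the outer measure, geometric convergence\<close>

lemma Pouter_mono: "B \<subseteq> B' \<Longrightarrow> Pouter p w xs B \<le> Pouter p w xs B'"
  unfolding Pouter_def by (rule INF_superset_mono) auto

lemma Pouter_UN_le:
  assumes "\<And>j. D j \<in> Alg (- int j)"
  shows "Pouter p w xs (\<Union>j. D j) \<le> (\<Sum>j. PmN p w xs (- int j) (D j))"
  unfolding Pouter_def by (rule INF_lower) (use assms in blast)

lemma geometric_tail_sums:
  fixes c r :: real
  assumes "0 \<le> r" "r < 1"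
  shows "(\<lambda>j. if n \<le> j then c * r ^ j else 0) sums (c * r ^ n / (1 - r))"
proof -
  have "(\<lambda>i. c * r ^ n * r ^ i) sums (c * r ^ n * (1 / (1 - r)))"
    using assms by (intro sums_mult geometric_sums) simp
  then have "(\<lambda>i. if n \<le> i + n then c * r ^ (i + n) else 0) sums (c * r ^ n / (1 - r))"
    by (simp add: power_add mult_ac)
  then have "(\<lambda>j. if n \<le> j then c * r ^ j else 0) sums
      (c * r ^ n / (1 - r) + (\<Sum>j<n. if n \<le> j then c * r ^ j else 0))"
    by (rule sums_iff_shift[THEN iffD1])
  then show ?thesis by simp
qed

text \<open>\<open>Pouter\<close> is not a measure, so Borel--Cantelli is argued from its definition:
  a cover may use each \<open>D j\<close> at its own level \<open>- j\<close>.\<close>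

lemma Pouter_tail_le:
  assumes D: "\<And>j. D j \<in> Alg (- int j)" "\<And>j. PmN p w xs (- int j) (D j) \<le> ennreal (c * r ^ j)"
    and "0 \<le> c" "0 \<le> r" "r < 1"
  shows "Pouter p w xs (\<Union>j\<in>{n..}. D j) \<le> ennreal (c * r ^ n / (1 - r))"
proof -
  define D' where "D' j = (if n \<le> j then D j else {})" for j
  have "D' j \<in> Alg (- int j)" for j
    using D(1) by (simp add: D'_def Alg_def sigma_sets.Empty)
  then have "Pouter p w xs (\<Union>j. D' j) \<le> (\<Sum>j. PmN p w xs (- int j) (D' j))"
    by (rule Pouter_UN_le)
  also have "\<dots> \<le> (\<Sum>j. ennreal (if n \<le> j then c * r ^ j else 0))"
    using D(2) by (intro suminf_le) (auto simp: D'_def PmN_def)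
  also have "\<dots> = ennreal (\<Sum>j. if n \<le> j then c * r ^ j else 0)"
    using geometric_tail_sums[OF assms(4,5), of n c] assms(3,4)
    by (intro suminf_ennreal2) (auto simp: sums_iff)
  also have "(\<Sum>j. if n \<le> j then c * r ^ j else 0) = c * r ^ n / (1 - r)"
    using geometric_tail_sums[OF assms(4,5), of n c] by (simp add: sums_iff)
  moreover have "(\<Union>j. D' j) = (\<Union>j\<in>{n..}. D j)" by (auto simp: D'_def)
  ultimately show ?thesis by simp
qed

lemma Pouter_limsup_eq_0:
  assumes "\<And>j. D j \<in> Alg (- int j)" "\<And>j. PmN p w xs (- int j) (D j) \<le> ennreal (c * r ^ j)"
    and "0 \<le> c" "0 \<le> r" "r < 1"
  shows "Pouter p w xs (\<Inter>n. \<Union>j\<in>{n..}. D j) = 0"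
proof -
  have "(\<lambda>n. c * r ^ n / (1 - r)) \<longlonglongrightarrow> c * 0 / (1 - r)"
    using assms by (intro tendsto_intros LIMSEQ_power_zero) auto
  moreover have "Pouter p w xs (\<Inter>n. \<Union>j\<in>{n..}. D j) \<le> ennreal (c * r ^ n / (1 - r))" for n
    by (rule order_trans[OF Pouter_mono Pouter_tail_le[OF assms]]) blast
  ultimately have "Pouter p w xs (\<Inter>n. \<Union>j\<in>{n..}. D j) \<le> ennreal (c * 0 / (1 - r))"
    by (intro LIMSEQ_le_const[OF tendsto_ennrealI]) auto
  then show ?thesis by simp
qed

lemma summable_Pouter_tails:
  assumes "\<And>j. D j \<in> Alg (- int j)" "\<And>j. PmN p w xs (- int j) (D j) \<le> ennreal (c * r ^ j)"
    and "0 \<le> c" "0 \<le> r" "r < 1"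
  shows "(\<Sum>k. Pouter p w xs (\<Union>j\<in>{k..}. D j)) < \<infinity>"
proof -
  have "(\<Sum>k. Pouter p w xs (\<Union>j\<in>{k..}. D j)) \<le> (\<Sum>k. ennreal (c / (1 - r) * r ^ k))"
    using Pouter_tail_le[OF assms] by (intro suminf_le) (auto simp: mult_ac)
  also have "\<dots> = ennreal (\<Sum>k. c / (1 - r) * r ^ k)"
    using assms by (intro suminf_ennreal2) (auto intro: summable_mult summable_geometric)
  finally show ?thesis by (simp add: order_le_less_trans)
qed

lemma dist_le_geometric_tail:
  fixes f :: "nat \<Rightarrow> 'a::metric_space"
  assumes "0 \<le> r" "r < 1" and step: "\<And>j. k \<le> j \<Longrightarrow> dist (f (Suc j)) (f j) \<le> r ^ j"
    and "k \<le> n" "n \<le> m"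
  shows "dist (f m) (f n) \<le> r ^ n / (1 - r)"
proof -
  have "dist (f (n + d)) (f n) \<le> (r ^ n - r ^ (n + d)) / (1 - r)" for d
  proof (induction d)
    case (Suc d)
    have "dist (f (n + Suc d)) (f n) \<le> dist (f (Suc (n + d))) (f (n + d)) + dist (f (n + d)) (f n)"
      by (simp add: dist_triangle)
    also have "\<dots> \<le> r ^ (n + d) + (r ^ n - r ^ (n + d)) / (1 - r)"
      using step[of "n + d"] \<open>k \<le> n\<close> Suc.IH by simp
    also have "\<dots> = (r ^ n - r ^ (n + Suc d)) / (1 - r)"
      using \<open>r < 1\<close> by (simp add: field_simps)
    finally show ?case .
  qed simp
  from this[of "m - n"] have "dist (f m) (f n) \<le> (r ^ n - r ^ m) / (1 - r)"
    using \<open>n \<le> m\<close> by simp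
  also have "\<dots> \<le> r ^ n / (1 - r)"
    using assms by (intro divide_right_mono) auto
  finally show ?thesis .
qed

lemma geometric_steps_convergent:
  fixes f :: "nat \<Rightarrow> 'a::complete_space"
  assumes r: "0 \<le> r" "r < 1" and step: "\<And>j. k \<le> j \<Longrightarrow> dist (f (Suc j)) (f j) \<le> r ^ j"
  shows "convergent f" and "k \<le> n \<Longrightarrow> dist (lim f) (f n) \<le> r ^ n / (1 - r)"
proof -
  have tail: "dist (f m) (f n) \<le> r ^ n / (1 - r)" if "k \<le> n" "n \<le> m" for m n
    using dist_le_geometric_tail[OF r step that] .
  have "Cauchy f"
  proof (rule Cauchy_altdef2[THEN iffD2], intro allI impI)
    fix e :: real assume "0 < e"
    have "(\<lambda>n. r ^ n / (1 - r)) \<longlonglongrightarrow> 0 / (1 - r)"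
      using r by (intro tendsto_intros LIMSEQ_power_zero) auto
    then obtain N where N: "\<forall>n\<ge>N. r ^ n / (1 - r) < e"
      using \<open>0 < e\<close> order_tendstoD(2) by (fastforce simp: eventually_sequentially)
    show "\<exists>N. \<forall>n\<ge>N. dist (f n) (f N) < e"
    proof (intro exI allI impI)
      fix n assume "max N k \<le> n"
      then show "dist (f n) (f (max N k)) < e"
        using order_le_less_trans[OF tail[of "max N k" n] N[rule_format, of "max N k"]] by simp
    qed
  qed
  then show conv: "convergent f" by (simp add: Cauchy_convergent_iff)
  assume "k \<le> n"
  have "(\<lambda>m. dist (f m) (f n)) \<longlonglongrightarrow> dist (lim f) (f n)"
    using conv by (intro tendsto_intros) (simp add: convergent_LIMSEQ_iff)
  then show "dist (lim f) (f n) \<le> r ^ n / (1 - r)"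
    by (rule LIMSEQ_le_const2) (use tail \<open>k \<le> n\<close> in auto)
qed

lemma finite_markov_inequality:
  fixes q D :: "'x \<Rightarrow> real"
  assumes "finite S" "T \<subseteq> S" "\<And>s. s \<in> S \<Longrightarrow> 0 \<le> q s" "\<And>s. s \<in> S \<Longrightarrow> 0 \<le> D s"
    and "0 < t" "\<And>s. s \<in> T \<Longrightarrow> t \<le> D s"
  shows "(\<Sum>s\<in>T. q s) \<le> (\<Sum>s\<in>S. q s * D s) / t"
proof -
  have "(\<Sum>s\<in>T. q s) \<le> (\<Sum>s\<in>T. q s * D s / t)"
  proof (rule sum_mono)
    fix s assume "s \<in> T"
    then have "q s * t \<le> q s * D s" using assms by (intro mult_left_mono) auto
    then show "q s \<le> q s * D s / t" using \<open>0 < t\<close> by (simp add: le_divide_eq)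
  qed
  also have "\<dots> \<le> (\<Sum>s\<in>S. q s * D s / t)"
    using assms by (intro sum_mono2) auto
  finally show ?thesis by (simp add: sum_divide_distrib)
qed

section \<open>Contractive Markov systems\<close>

locale cms_system =
  fixes iv tv :: "'e::finite \<Rightarrow> 'v::finite" and K :: "'v \<Rightarrow> 'a::complete_space set"
    and w :: "'e \<Rightarrow> 'a \<Rightarrow> 'a" and p :: "'e \<Rightarrow> 'a \<Rightarrow> real" and a :: real
  assumes cms: "cms iv tv K w p a"
begin

lemma a_pos: "0 < a" and a_less_1: "a < 1"
  using cms by (simp_all add: cms_def)

lemma K_disjoint: "u \<noteq> v \<Longrightarrow> K u \<inter> K v = {}"
  using cms by (simp add: cms_def)

lemma w_in_K: "x \<in> K (iv e) \<Longrightarrow> w e x \<in> K (tv e)"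
  using cms unfolding cms_def by blast

lemma p_eq_0_outside: "x \<notin> K (iv e) \<Longrightarrow> p e x = 0"
  using cms by (simp add: cms_def)

lemma contraction_on_average:
  "x \<in> K v \<Longrightarrow> y \<in> K v \<Longrightarrow> (\<Sum>e\<in>UNIV. p e x * dist (w e x) (w e y)) \<le> a * dist x y"
  using cms by (simp add: cms_def)

sublocale random_map p w
  using cms by unfold_locales (simp_all add: cms_def)

lemma iv_eq_if_p_nonzero: "p e x \<noteq> 0 \<Longrightarrow> x \<in> K v \<Longrightarrow> iv e = v"
  using p_eq_0_outside K_disjoint by blast

lemma apply_path_contraction_on_average:
  "x \<in> K v \<Longrightarrow> y \<in> K v \<Longrightarrow>
   (\<Sum>es | length es = n. path_prob p w x es * dist (apply_path w es x) (apply_path w es y))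
     \<le> a ^ n * dist x y"
proof (induction n arbitrary: x y v)
  case 0
  have "{es::'e list. length es = 0} = {[]}" by auto
  then show ?case by simp
next
  case (Suc n)
  let ?S = "\<lambda>x y. \<Sum>es | length es = n.
    path_prob p w x es * dist (apply_path w es x) (apply_path w es y)"
  have "p e x * ?S (w e x) (w e y) \<le> p e x * (a ^ n * dist (w e x) (w e y))" for e
  proof (cases "p e x = 0")
    case False
    then have "w e x \<in> K (tv e)" "w e y \<in> K (tv e)"
      using iv_eq_if_p_nonzero Suc.prems w_in_K by auto
    then show ?thesis by (intro mult_left_mono Suc.IH) (auto simp: p_nonneg)
  qed simp
  then have "(\<Sum>e\<in>UNIV. p e x * ?S (w e x) (w e y)) \<le>
      a ^ n * (\<Sum>e\<in>UNIV. p e x * dist (w e x) (w e y))"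
    by (simp add: sum_mono sum_distrib_left mult.left_commute)
  also have "\<dots> \<le> a ^ n * (a * dist x y)"
    using contraction_on_average[OF Suc.prems] a_pos by (intro mult_left_mono) auto
  also have "\<dots> = a ^ Suc n * dist x y" by simp
  finally show ?case
    by (simp add: sum_lists_length_Suc sum_distrib_left mult.assoc)
qed

lemma Y_path_eq_apply_path:
  assumes "path_prob p w x es \<noteq> 0" "x \<in> K v" "es \<noteq> []"
  shows "Y_path w iv zs es = apply_path w es (zs v)"
  using assms iv_eq_if_p_nonzero by (cases es) (auto simp: Y_path_def)

lemma expected_dist_Y_path_le:
  assumes "xs v \<in> K v" "ys v \<in> K v"
  shows "(\<Sum>es | length es = Suc j.
      path_prob p w (xs v) es * dist (Y_path w iv xs es) (Y_path w iv ys es))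
    \<le> a ^ Suc j * dist (xs v) (ys v)"
proof -
  have "(\<Sum>es | length es = Suc j.
      path_prob p w (xs v) es * dist (Y_path w iv xs es) (Y_path w iv ys es)) =
    (\<Sum>es | length es = Suc j.
      path_prob p w (xs v) es * dist (apply_path w es (xs v)) (apply_path w es (ys v)))"
  proof (intro sum.cong refl)
    fix es :: "'e list" assume "es \<in> {es. length es = Suc j}"
    then have "es \<noteq> []" by auto
    then show "path_prob p w (xs v) es * dist (Y_path w iv xs es) (Y_path w iv ys es) =
        path_prob p w (xs v) es * dist (apply_path w es (xs v)) (apply_path w es (ys v))"
      using Y_path_eq_apply_path[OF _ assms(1) \<open>es \<noteq> []\<close>]
      by (cases "path_prob p w (xs v) es = 0") auto
  qed
  also have "\<dots> \<le> a ^ Suc j * dist (xs v) (ys v)"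
    using assms by (rule apply_path_contraction_on_average)
  finally show ?thesis .
qed

lemma expected_dist_Y_path_tl_le:
  assumes "\<And>v. xs v \<in> K v"
  shows "(\<Sum>es | length es = Suc (Suc j).
      path_prob p w (xs v) es * dist (Y_path w iv xs es) (Y_path w iv xs (tl es)))
    \<le> a ^ Suc j * (\<Sum>e\<in>UNIV. dist (w e (xs (iv e))) (xs (tv e)))"
proof -
  let ?M = "\<Sum>e\<in>UNIV. dist (w e (xs (iv e))) (xs (tv e))"
  let ?S = "\<lambda>e. \<Sum>es | length es = Suc j.
      path_prob p w (w e (xs v)) es * dist (Y_path w iv xs (e # es)) (Y_path w iv xs es)"
  have "p e (xs v) * ?S e \<le> p e (xs v) * (a ^ Suc j * ?M)" for e
  proof (cases "p e (xs v) = 0")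
    case False
    then have "iv e = v" using assms iv_eq_if_p_nonzero by blast
    then have z: "w e (xs v) \<in> K (tv e)" using assms w_in_K by blast
    have "?S e = (\<Sum>es | length es = Suc j. path_prob p w (w e (xs v)) es *
        dist (apply_path w es (w e (xs v))) (apply_path w es (xs (tv e))))"
    proof (intro sum.cong refl)
      fix es :: "'e list" assume "es \<in> {es. length es = Suc j}"
      then have "es \<noteq> []" by auto
      have "Y_path w iv xs (e # es) = apply_path w es (w e (xs v))"
        using \<open>iv e = v\<close> by (simp add: Y_path_def)
      then show "path_prob p w (w e (xs v)) es * dist (Y_path w iv xs (e # es)) (Y_path w iv xs es) =
          path_prob p w (w e (xs v)) es *
            dist (apply_path w es (w e (xs v))) (apply_path w es (xs (tv e)))"
        using Y_path_eq_apply_path[OF _ z \<open>es \<noteq> []\<close>]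
        by (cases "path_prob p w (w e (xs v)) es = 0") auto
    qed
    also have "\<dots> \<le> a ^ Suc j * dist (w e (xs (iv e))) (xs (tv e))"
      using apply_path_contraction_on_average[OF z assms[of "tv e"], of "Suc j"] \<open>iv e = v\<close> by simp
    also have "\<dots> \<le> a ^ Suc j * ?M"
      using a_pos by (intro mult_left_mono member_le_sum) auto
    finally show ?thesis by (intro mult_left_mono) (auto simp: p_nonneg)
  qed simp
  then have "(\<Sum>e\<in>UNIV. p e (xs v) * ?S e) \<le> (\<Sum>e\<in>UNIV. p e (xs v) * (a ^ Suc j * ?M))"
    by (rule sum_mono)
  also have "\<dots> = a ^ Suc j * ?M"
    by (simp add: sum_distrib_right[symmetric] sum_p)
  finally show ?thesis
    by (simp add: sum_lists_length_Suc[where n = "Suc j"] sum_distrib_left mult.assoc)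
qed

end

locale cms_pair = cms_system iv tv K w p a
  for iv tv :: "'e::finite \<Rightarrow> 'v::finite" and K :: "'v \<Rightarrow> 'a::complete_space set"
    and w :: "'e \<Rightarrow> 'a \<Rightarrow> 'a" and p :: "'e \<Rightarrow> 'a \<Rightarrow> real" and a :: real +
  fixes xs ys :: "'v \<Rightarrow> 'a"
  assumes xs_in_K: "xs v \<in> K v" and ys_in_K: "ys v \<in> K v"
begin

abbreviation Yx :: "(int \<Rightarrow> 'e) \<Rightarrow> nat \<Rightarrow> 'a" where
  "Yx \<sigma> n \<equiv> Y w iv xs (- int n) 0 \<sigma>"

abbreviation Yy :: "(int \<Rightarrow> 'e) \<Rightarrow> nat \<Rightarrow> 'a" where
  "Yy \<sigma> n \<equiv> Y w iv ys (- int n) 0 \<sigma>"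

definition rate :: real where
  "rate = sqrt a"

lemma rate_pos: "0 < rate" and rate_less_1: "rate < 1"
  using a_pos a_less_1 by (simp_all add: rate_def)

lemma a_power_eq: "a ^ j = rate ^ j * rate ^ j"
  using a_pos by (simp add: rate_def flip: power_mult_distrib)

text \<open>For the window \<open>es\<close> of \<open>\<sigma>\<close> on \<open>[-j, 0]\<close>, \<open>defect es\<close> bounds
  \<open>dist (Yx \<sigma> j) (Yy \<sigma> j)\<close> and, for \<open>j > 0\<close>, \<open>dist (Yx \<sigma> j) (Yx \<sigma> (j - 1))\<close>.
  The guard avoids \<open>Y_path\<close> of \<open>[]\<close>, which depends on the unspecified \<open>hd []\<close>.\<close>

definition defect :: "'e list \<Rightarrow> real" where
  "defect es = dist (Y_path w iv xs es) (Y_path w iv ys es) +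
     (if tl es = [] then 0 else dist (Y_path w iv xs es) (Y_path w iv xs (tl es)))"

definition defect_bound :: real where
  "defect_bound = (\<Sum>v\<in>UNIV. dist (xs v) (ys v)) + (\<Sum>e\<in>UNIV. dist (w e (xs (iv e))) (xs (tv e)))"

definition bad :: "nat \<Rightarrow> (int \<Rightarrow> 'e) set" where
  "bad j = {\<sigma>. rate ^ j < defect (window (- int j) (Suc j) \<sigma>)}"

lemma defect_nonneg: "0 \<le> defect es"
  by (simp add: defect_def)

lemma defect_bound_nonneg: "0 \<le> defect_bound"
  by (simp add: defect_bound_def sum_nonneg)

lemma expected_defect_le:
  "(\<Sum>es | length es = Suc j. path_prob p w (xs v) es * defect es) \<le> a ^ j * defect_bound"
proof -
  let ?S = "{es :: 'e list. length es = Suc j}"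
  have "(\<Sum>es\<in>?S. path_prob p w (xs v) es * dist (Y_path w iv xs es) (Y_path w iv ys es))
      \<le> a ^ j * (\<Sum>v\<in>UNIV. dist (xs v) (ys v))"
  proof -
    have "a ^ Suc j * dist (xs v) (ys v) \<le> a ^ j * (\<Sum>v\<in>UNIV. dist (xs v) (ys v))"
      using a_pos a_less_1
      by (intro mult_mono power_decreasing member_le_sum) (auto intro: sum_nonneg)
    then show ?thesis
      using expected_dist_Y_path_le[where xs = xs and ys = ys and v = v and j = j, OF xs_in_K ys_in_K]
      by linarith
  qed
  moreover have "(\<Sum>es\<in>?S. path_prob p w (xs v) es *
        (if tl es = [] then 0 else dist (Y_path w iv xs es) (Y_path w iv xs (tl es))))
      \<le> a ^ j * (\<Sum>e\<in>UNIV. dist (w e (xs (iv e))) (xs (tv e)))"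
  proof (cases j)
    case 0
    then have "tl es = []" if "es \<in> ?S" for es
      using that by (cases es) auto
    then show ?thesis using a_pos by (simp add: sum_nonneg)
  next
    case (Suc i)
    have "tl es \<noteq> []" if "es \<in> ?S" for es
      using that Suc by (cases es) auto
    then show ?thesis
      using Suc expected_dist_Y_path_tl_le[OF xs_in_K, of v i] by simp
  qed
  ultimately show ?thesis
    by (simp add: defect_def defect_bound_def distrib_left sum.distrib)
qed

lemma bad_eq_window_event:
  "bad j = {\<sigma>. window (- int j) (Suc j) \<sigma> \<in> {es. length es = Suc j \<and> rate ^ j < defect es}}"
  by (auto simp: bad_def)

lemma bad_in_Alg: "bad j \<in> Alg (- int j)"
  unfolding bad_eq_window_event by (rule window_event_in_Alg) auto

lemma PmN_bad_le: "PmN p w xs (- int j) (bad j) \<le> ennreal (defect_bound * rate ^ j)"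
  unfolding bad_eq_window_event
proof (rule PmN_window_event_le)
  fix v
  have "(\<Sum>es | length es = Suc j \<and> rate ^ j < defect es. path_prob p w (xs v) es)
      \<le> (\<Sum>es | length es = Suc j. path_prob p w (xs v) es * defect es) / rate ^ j"
    using rate_pos by (intro finite_markov_inequality) (auto simp: path_prob_nonneg defect_nonneg)
  also have "\<dots> \<le> a ^ j * defect_bound / rate ^ j"
    using rate_pos by (intro divide_right_mono expected_defect_le) simp
  also have "\<dots> = defect_bound * rate ^ j"
    using rate_pos by (simp add: a_power_eq)
  finally show "(\<Sum>es | length es = Suc j \<and> rate ^ j < defect es. path_prob p w (xs v) es)
      \<le> defect_bound * rate ^ j" .
qed auto

lemma dist_Yx_Yy_le:
  assumes "\<sigma> \<notin> bad j"
  shows "dist (Yx \<sigma> j) (Yy \<sigma> j) \<le> rate ^ j"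
proof -
  let ?es = "window (- int j) (Suc j) \<sigma>"
  have "dist (Y_path w iv xs ?es) (Y_path w iv ys ?es) \<le> defect ?es"
    by (simp add: defect_def)
  also have "\<dots> \<le> rate ^ j" using assms by (simp add: bad_def)
  finally show ?thesis by (simp add: Y_eq_Y_path_window)
qed

lemma dist_Yx_Suc_le:
  assumes "\<sigma> \<notin> bad (Suc j)"
  shows "dist (Yx \<sigma> (Suc j)) (Yx \<sigma> j) \<le> rate ^ Suc j"
proof -
  let ?es = "window (- int (Suc j)) (Suc (Suc j)) \<sigma>"
  have tl: "tl ?es = window (- int j) (Suc j) \<sigma>" by (simp add: tl_window)
  then have "dist (Yx \<sigma> (Suc j)) (Yx \<sigma> j) = dist (Y_path w iv xs ?es) (Y_path w iv xs (tl ?es))"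
    by (simp only: Y_eq_Y_path_window)
  also have "\<dots> \<le> defect ?es" using tl by (simp add: defect_def)
  also have "\<dots> \<le> rate ^ Suc j" using assms by (simp add: bad_def)
  finally show ?thesis .
qed

definition good_from :: "nat \<Rightarrow> (int \<Rightarrow> 'e) set" where
  "good_from k = {\<sigma>. \<forall>j\<ge>k. \<sigma> \<notin> bad j}"

lemma good_from_mono: "good_from k \<subseteq> good_from (Suc k)"
  by (auto simp: good_from_def)

lemma compl_good_from: "UNIV - good_from k = (\<Union>j\<in>{k..}. bad j)"
  by (auto simp: good_from_def)

lemma Pouter_not_eventually_good: "Pouter p w xs (- (\<Union>k. good_from k)) = 0"
proof -
  have "- (\<Union>k. good_from k) = (\<Inter>k. \<Union>j\<in>{k..}. bad j)"
    by (auto simp: good_from_def)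
  then show ?thesis
    using Pouter_limsup_eq_0[OF bad_in_Alg PmN_bad_le defect_bound_nonneg _ rate_less_1] rate_pos
    by simp
qed

lemma summable_Pouter_compl_good_from: "(\<Sum>k. Pouter p w xs (UNIV - good_from k)) < \<infinity>"
  unfolding compl_good_from
  using summable_Pouter_tails[OF bad_in_Alg PmN_bad_le defect_bound_nonneg _ rate_less_1] rate_pos
  by simp

lemma dS_closed_good_from: "dS_closed (good_from k)"
  unfolding dS_closed_def
proof (intro allI impI)
  fix \<sigma> :: "int \<Rightarrow> 'e"
  assume approx: "\<forall>\<epsilon>>0. \<exists>\<tau>\<in>good_from k. dS \<sigma> \<tau> < \<epsilon>"
  have "\<sigma> \<notin> bad j" if "k \<le> j" for j
  proof -
    obtain \<tau> where "\<tau> \<in> good_from k" "dS \<sigma> \<tau> < (1/2) ^ j"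
      using approx by (meson zero_less_divide_1_iff zero_less_numeral zero_less_power)
    then show ?thesis
      using that window_eq_if_dS_less by (fastforce simp: good_from_def bad_def)
  qed
  then show "\<sigma> \<in> good_from k" by (simp add: good_from_def)
qed

lemma
  assumes "\<sigma> \<in> good_from k"
  shows convergent_Yx: "convergent (Yx \<sigma>)"
    and dist_lim_Yx_le: "k \<le> n \<Longrightarrow> dist (lim (Yx \<sigma>)) (Yx \<sigma> n) \<le> rate ^ n / (1 - rate)"
proof -
  have "dist (Yx \<sigma> (Suc j)) (Yx \<sigma> j) \<le> rate ^ j" if "k \<le> j" for j
  proof -
    have "dist (Yx \<sigma> (Suc j)) (Yx \<sigma> j) \<le> rate ^ Suc j"
      using assms that by (intro dist_Yx_Suc_le) (simp add: good_from_def)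
    also have "\<dots> \<le> rate ^ j"
      using rate_pos rate_less_1 by (intro power_decreasing) auto
    finally show ?thesis .
  qed
  note geometric_steps_convergent[of rate k "Yx \<sigma>", OF _ rate_less_1 this]
  then show "convergent (Yx \<sigma>)" "k \<le> n \<Longrightarrow> dist (lim (Yx \<sigma>)) (Yx \<sigma> n) \<le> rate ^ n / (1 - rate)"
    using rate_pos by auto
qed

lemma dist_Yx_Yy_tendsto_0:
  assumes "\<sigma> \<in> good_from k"
  shows "(\<lambda>n. dist (Yx \<sigma> n) (Yy \<sigma> n)) \<longlonglongrightarrow> 0"
proof (rule Lim_null_comparison)
  show "\<forall>\<^sub>F n in sequentially. norm (dist (Yx \<sigma> n) (Yy \<sigma> n)) \<le> rate ^ n"
    using assms dist_Yx_Yy_le by (auto simp: good_from_def eventually_sequentially)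
  show "(\<lambda>n. rate ^ n) \<longlonglongrightarrow> 0"
    using rate_pos rate_less_1 by (intro LIMSEQ_power_zero) auto
qed

lemma Yy_tendsto_lim_Yx:
  assumes "\<sigma> \<in> good_from k"
  shows "Yy \<sigma> \<longlonglongrightarrow> lim (Yx \<sigma>)"
proof -
  have "(\<lambda>n. dist (Yx \<sigma> n) (lim (Yx \<sigma>))) \<longlonglongrightarrow> 0"
    using convergent_Yx[OF assms]
    by (intro tendsto_dist_iff[THEN iffD1]) (simp add: convergent_LIMSEQ_iff)
  then have "(\<lambda>n. dist (Yx \<sigma> n) (Yy \<sigma> n) + dist (Yx \<sigma> n) (lim (Yx \<sigma>))) \<longlonglongrightarrow> 0"
    using dist_Yx_Yy_tendsto_0[OF assms] tendsto_add_zero by blast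
  then have "(\<lambda>n. dist (Yy \<sigma> n) (lim (Yx \<sigma>))) \<longlonglongrightarrow> 0"
    by (rule Lim_null_comparison[rotated]) (simp add: dist_triangle3)
  then show ?thesis by (rule tendsto_dist_iff[THEN iffD2])
qed

definition holder_exponent :: real where
  "holder_exponent = ln rate / ln (1/2)"

definition holder_constant :: real where
  "holder_constant = 2 / (rate * (1 - rate))"

lemma holder_exponent_pos: "0 < holder_exponent"
  using rate_pos rate_less_1 by (simp add: holder_exponent_def divide_neg_neg)

lemma holder_constant_pos: "0 < holder_constant"
  using rate_pos rate_less_1 by (simp add: holder_constant_def)

lemma half_power_powr_holder_exponent: "((1/2) ^ n) powr holder_exponent = rate ^ n"
proof -
  have "((1/2) ^ n) powr holder_exponent = ((1/2) powr holder_exponent) powr real n"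
    by (simp add: powr_realpow[symmetric] powr_powr_swap)
  also have "(1/2 :: real) powr holder_exponent = rate"
    using rate_pos by (simp add: holder_exponent_def powr_def)
  finally show ?thesis
    using rate_pos by (simp add: powr_realpow)
qed

lemma holder_on_good_from:
  assumes "\<sigma> \<in> good_from k" "\<sigma>' \<in> good_from k" "dS \<sigma> \<sigma>' \<le> (1/2) ^ Suc k"
  shows "dist (lim (Yx \<sigma>)) (lim (Yx \<sigma>')) \<le> holder_constant * dS \<sigma> \<sigma>' powr holder_exponent"
proof (cases "\<sigma> = \<sigma>'")
  case False
  then obtain L where L: "dS \<sigma> \<sigma>' = (1/2) ^ L" by (simp add: dS_def)
  then have "Suc k \<le> L"
    using assms(3) power_decreasing_iff[of "1/2 :: real" L "Suc k"] by simp
  then obtain n where n: "L = Suc n" "k \<le> n" by (cases L) auto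
  have "dS \<sigma> \<sigma>' < (1/2) ^ n"
    unfolding L n(1) by (rule power_strict_decreasing) auto
  then have "window (- int n) (Suc n) \<sigma> = window (- int n) (Suc n) \<sigma>'"
    by (rule window_eq_if_dS_less)
  then have same: "Yx \<sigma> n = Yx \<sigma>' n" by (simp add: Y_eq_Y_path_window)
  have "dist (lim (Yx \<sigma>)) (lim (Yx \<sigma>')) \<le>
      dist (lim (Yx \<sigma>)) (Yx \<sigma> n) + dist (lim (Yx \<sigma>')) (Yx \<sigma>' n)"
    using same dist_triangle2 by metis
  also have "\<dots> \<le> 2 * (rate ^ n / (1 - rate))"
    using dist_lim_Yx_le[OF assms(1) n(2)] dist_lim_Yx_le[OF assms(2) n(2)] by simp
  also have "\<dots> = holder_constant * rate ^ L"
    using rate_pos rate_less_1 n(1) by (simp add: holder_constant_def field_simps)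
  finally show ?thesis by (simp add: L half_power_powr_holder_exponent)
qed (simp add: dS_def)

lemma Holder_on_closed_exhaustion:
  "\<exists>Q :: nat \<Rightarrow> (int \<Rightarrow> 'e) set. \<exists>\<alpha> C :: real.
     (\<forall>k. dS_closed (Q k)) \<and> (\<forall>k. Q k \<subseteq> Q (Suc k)) \<and>
     (\<Sum>k. Pouter p w xs (UNIV - Q k)) < \<infinity> \<and> \<alpha> > 0 \<and> C > 0 \<and>
     (\<forall>k. \<exists>\<delta>>0. (\<forall>\<sigma>\<in>Q k. convergent (Yx \<sigma>)) \<and>
        (\<forall>\<sigma>\<in>Q k. \<forall>\<sigma>'\<in>Q k. dS \<sigma> \<sigma>' \<le> \<delta> \<longrightarrow>
           dist (lim (Yx \<sigma>)) (lim (Yx \<sigma>')) \<le> C * dS \<sigma> \<sigma>' powr \<alpha>))"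
proof (rule exI[of _ good_from], rule exI[of _ holder_exponent], rule exI[of _ holder_constant],
    intro conjI allI)
  fix k
  show "\<exists>\<delta>>0. (\<forall>\<sigma>\<in>good_from k. convergent (Yx \<sigma>)) \<and>
      (\<forall>\<sigma>\<in>good_from k. \<forall>\<sigma>'\<in>good_from k. dS \<sigma> \<sigma>' \<le> \<delta> \<longrightarrow>
         dist (lim (Yx \<sigma>)) (lim (Yx \<sigma>')) \<le> holder_constant * dS \<sigma> \<sigma>' powr holder_exponent)"
    using convergent_Yx holder_on_good_from by (intro exI[of _ "(1/2) ^ Suc k"]) auto
qed (use summable_Pouter_compl_good_from in
    \<open>simp_all add: dS_closed_good_from good_from_mono holder_exponent_pos holder_constant_pos\<close>)

end

theorem lemma3:
  fixes iv tv :: "'e::finite \<Rightarrow> 'v::finite"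
    and K :: "'v \<Rightarrow> 'a::complete_space set"
    and w :: "'e \<Rightarrow> 'a \<Rightarrow> 'a" and p :: "'e \<Rightarrow> 'a \<Rightarrow> real" and a :: real
    and xs ys :: "'v \<Rightarrow> 'a"
  assumes "cms iv tv K w p a"
    and "\<And>v. xs v \<in> K v" and "\<And>v. ys v \<in> K v"
  shows
    "(\<exists>Z. Pouter p w xs Z = 0 \<and> (\<forall>\<sigma>. \<sigma> \<notin> Z \<longrightarrow>
        (\<lambda>k::nat. dist (Y w iv xs (- int k) 0 \<sigma>) (Y w iv ys (- int k) 0 \<sigma>)) \<longlonglongrightarrow> 0))
   \<and> (\<exists>Z. Pouter p w xs Z = 0 \<and> (\<forall>\<sigma>. \<sigma> \<notin> Z \<longrightarrow>
        convergent (\<lambda>k::nat. Y w iv xs (- int k) 0 \<sigma>)))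
   \<and> (\<exists>Z. Pouter p w xs Z = 0 \<and> (\<forall>\<sigma>. \<sigma> \<notin> Z \<longrightarrow>
        convergent (\<lambda>k::nat. Y w iv xs (- int k) 0 \<sigma>) \<and>
        convergent (\<lambda>k::nat. Y w iv ys (- int k) 0 \<sigma>) \<and>
        lim (\<lambda>k::nat. Y w iv xs (- int k) 0 \<sigma>) = lim (\<lambda>k::nat. Y w iv ys (- int k) 0 \<sigma>)))
   \<and> (\<exists>Q :: nat \<Rightarrow> (int \<Rightarrow> 'e) set. \<exists>\<alpha> C :: real.
        (\<forall>k. dS_closed (Q k)) \<and> (\<forall>k. Q k \<subseteq> Q (Suc k)) \<and>
        (\<Sum>k. Pouter p w xs (UNIV - Q k)) < \<infinity> \<and> \<alpha> > 0 \<and> C > 0 \<and>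
        (\<forall>k. \<exists>\<delta>>0. (\<forall>\<sigma>\<in>Q k. convergent (\<lambda>n::nat. Y w iv xs (- int n) 0 \<sigma>)) \<and>
           (\<forall>\<sigma>\<in>Q k. \<forall>\<sigma>'\<in>Q k. dS \<sigma> \<sigma>' \<le> \<delta> \<longrightarrow>
              dist (lim (\<lambda>n::nat. Y w iv xs (- int n) 0 \<sigma>)) (lim (\<lambda>n::nat. Y w iv xs (- int n) 0 \<sigma>'))
                \<le> C * dS \<sigma> \<sigma>' powr \<alpha>)))"
proof -
  interpret cms_pair iv tv K w p a xs ys
    using assms by unfold_locales
  define Z where "Z = - (\<Union>k. good_from k)"
  have "Pouter p w xs Z = 0"
    unfolding Z_def by (rule Pouter_not_eventually_good)
  moreover have "convergent (Yx \<sigma>) \<and> (\<lambda>n. dist (Yx \<sigma> n) (Yy \<sigma> n)) \<longlonglongrightarrow> 0 \<and>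
      convergent (Yy \<sigma>) \<and> lim (Yx \<sigma>) = lim (Yy \<sigma>)" if "\<sigma> \<notin> Z" for \<sigma>
  proof -
    obtain k where k: "\<sigma> \<in> good_from k" using \<open>\<sigma> \<notin> Z\<close> by (auto simp: Z_def)
    then have lim: "Yy \<sigma> \<longlonglongrightarrow> lim (Yx \<sigma>)" by (rule Yy_tendsto_lim_Yx)
    show ?thesis
      using convergent_Yx[OF k] dist_Yx_Yy_tendsto_0[OF k] convergentI[OF lim] limI[OF lim] by simp
  qed
  ultimately show ?thesis
    using Holder_on_closed_exhaustion by (intro conjI exI[of _ Z]) simp_all
qed

end
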